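(* For $t\in\{1,2,\dots\}\cup\{\infty\}$ let $r_t$ be the radius of convergence of $f_t(x)=\sum_{n\ge0}c^{(t)}_nx^n$, where $c^{(t)}_n$ is the number of permutations of $\{1,\dots,n\}$ in $\mathcal F(1,t)$. Then $r_1=1/4$, $r_\infty=1/5$, and there are constants $C>0$ and $0<c<1$ such that $0\le r_t-1/5\le Cc^t$ for all integers $t\ge1$.
   Context: Forkstack sorting with capacities $s,t\in\{1,2,3,\dots\}\cup\{\infty\}$: a permutation $\pi=\pi_1\cdots\pi_n$ of $\{1,\dots,n\}$ is placed on an input stack with $\pi_1$ on top; a working stack and an output stack are initially empty. A move either (i) removes the top $k$ elements of the input stack ($1\le k\le s$) and places them as a block, relative order unchanged, on top of the working stack, or (ii) removes the top $l$ elements of the working stack ($1\le l\le t$) and places them as a block, relative order unchanged, on top of the output stack. $\pi$ is sortable if some sequence of moves ends with input and working stacks empty and the output stack reading $1,2,\dots,n$ from top to bottom. $\mathcal F(s,t)$ is the set of sortable permutations. *)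

theory Defs
  imports "HOL-Analysis.Analysis" "HOL-Library.Extended_Nat"
begin

text \<open>Configurations (input, working, output); each stack is a list whose head is the top.\<close>
type_synonym config = "nat list \<times> nat list \<times> nat list"

inductive fs_move :: "enat \<Rightarrow> enat \<Rightarrow> config \<Rightarrow> config \<Rightarrow> bool" for s t where
  push: "\<lbrakk>1 \<le> k; enat k \<le> s; k \<le> length inp\<rbrakk> \<Longrightarrow>
         fs_move s t (inp, w, out) (drop k inp, take k inp @ w, out)"
| pop: "\<lbrakk>1 \<le> l; enat l \<le> t; l \<le> length w\<rbrakk> \<Longrightarrow>
         fs_move s t (inp, w, out) (inp, drop l w, take l w @ out)"

definition forkstack_sortable :: "enat \<Rightarrow> enat \<Rightarrow> nat list \<Rightarrow> bool" where
  "forkstack_sortable s t \<pi> \<longleftrightarrow>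
     (fs_move s t)\<^sup>*\<^sup>* (\<pi>, [], []) ([], [], [1..<length \<pi> + 1])"

text \<open>Permutations of {1..n} as lists (first entry on top of the input stack).\<close>
definition perms_of :: "nat \<Rightarrow> nat list set" where
  "perms_of n = {\<pi>. distinct \<pi> \<and> set \<pi> = {1..n}}"

definition fs_count :: "enat \<Rightarrow> enat \<Rightarrow> nat \<Rightarrow> nat" where
  "fs_count s t n = card {\<pi> \<in> perms_of n. forkstack_sortable s t \<pi>}"

definition r_rad :: "enat \<Rightarrow> ereal" where
  "r_rad t = conv_radius (\<lambda>n. real (fs_count 1 t n))"

end

theory Submission
  imports Defs
begin

text \<open>With input capacity 1 a run is a word of pushes and pops of at most \<open>t\<close> elements. Replacing
  a push followed by a pop of \<open>l \<ge> 2\<close> elements by a pop of \<open>l - 1\<close>, a push and a pop of one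
  element, every sortable permutation is sorted by a canonical run, in which pops of several
  elements only follow pops, and this canonical run is unique. Running the machine backwards from
  the sorted output, the sortable permutations of length \<open>n\<close> correspond bijectively to the reversed
  canonical runs with \<open>n\<close> pushes, read as excursions of a lattice walk.

  Explicit supersolutions of the one-step recursion for the generating function of these walks
  bound their number by \<open>2 \<cdot> 5\<^sup>n\<close> for every \<open>t\<close> and by \<open>2 \<cdot> 4\<^sup>n\<close> for \<open>t = 1\<close>. Conversely, if the
  generating function \<open>E\<close> of excursions converges at \<open>x\<close>, splitting an excursion at its first push
  gives \<open>E \<ge> 1 + \<Sum>\<^sub>m c\<^sub>t(m) (x E)\<^bsup>m+1\<^esup>\<close>, where \<open>c\<^sub>t(m)\<close> counts the compositions of \<open>m\<close> into
  parts of size at most \<open>t\<close>. Since \<open>c\<^sub>1(m) \<ge> 1\<close>, this forces \<open>x \<le> 1/4\<close> for \<open>t = 1\<close>; since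
  \<open>c\<^sub>t(m) \<ge> 2\<^bsup>m-1\<^esup>\<close> for \<open>m \<le> t\<close>, it forces \<open>x \<le> 1/5 + (9/10)\<^sup>t\<close> once \<open>(9/10)\<^sup>t \<le> 1/10\<close>.
  Finally \<open>r\<^sub>\<infinity> \<le> r\<^sub>t\<close> for every \<open>t\<close>.\<close>

declare upt_Suc [simp del]

section \<open>Runs with input capacity one\<close>

datatype move = Push | Pop nat

fun run :: "enat \<Rightarrow> move list \<Rightarrow> config \<Rightarrow> config option" where
  "run t [] c = Some c"
| "run t (Push # ms) (i, w, out) = (case i of [] \<Rightarrow> None | x # i' \<Rightarrow> run t ms (i', x # w, out))"
| "run t (Pop l # ms) (i, w, out) =
     (if 1 \<le> l \<and> enat l \<le> t \<and> l \<le> length w then run t ms (i, drop l w, take l w @ out) else None)"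

fun unrun :: "enat \<Rightarrow> move list \<Rightarrow> config \<Rightarrow> config option" where
  "unrun t [] c = Some c"
| "unrun t (Push # ms) (i, w, out) = (case w of [] \<Rightarrow> None | x # w' \<Rightarrow> unrun t ms (x # i, w', out))"
| "unrun t (Pop l # ms) (i, w, out) =
     (if 1 \<le> l \<and> enat l \<le> t \<and> l \<le> length out
      then unrun t ms (i, take l out @ w, drop l out) else None)"

lemma run_append: "run t (ms @ ms') c = Option.bind (run t ms c) (run t ms')"
  by (induction t ms c rule: run.induct) (auto split: list.split)

lemma unrun_append: "unrun t (ms @ ms') c = Option.bind (unrun t ms c) (unrun t ms')"
  by (induction t ms c rule: unrun.induct) (auto split: list.split)

lemma run_single_iff_unrun: "run t [m] c = Some c' \<longleftrightarrow> unrun t [m] c' = Some c"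
proof (cases m)
  case Push
  then show ?thesis by (cases c; cases c') (auto split: list.splits)
next
  case (Pop l)
  obtain i w out i' w' out' where c: "c = (i, w, out)" and c': "c' = (i', w', out')"
    by (cases c; cases c')
  have "(l \<le> length w \<and> i' = i \<and> w' = drop l w \<and> out' = take l w @ out) \<longleftrightarrow>
        (l \<le> length out' \<and> i = i' \<and> w = take l out' @ w' \<and> out = drop l out')"
    by (auto simp: min_def)
  with Pop c c' show ?thesis by auto
qed

lemma run_iff_unrun: "run t ms c = Some c' \<longleftrightarrow> unrun t (rev ms) c' = Some c"
proof (induction ms arbitrary: c)
  case Nil
  then show ?case by auto
next
  case (Cons m ms)
  have "run t (m # ms) c = Some c' \<longleftrightarrow> (\<exists>c1. run t [m] c = Some c1 \<and> run t ms c1 = Some c')"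
    using run_append[of t "[m]" ms c] by (auto simp: bind_eq_Some_conv)
  also have "\<dots> \<longleftrightarrow> (\<exists>c1. unrun t (rev ms) c' = Some c1 \<and> unrun t [m] c1 = Some c)"
    by (auto simp: Cons.IH run_single_iff_unrun)
  also have "\<dots> \<longleftrightarrow> unrun t (rev (m # ms)) c' = Some c"
    by (simp add: unrun_append bind_eq_Some_conv)
  finally show ?case .
qed

lemma fs_move_1_iff_run: "fs_move 1 t c c' \<longleftrightarrow> (\<exists>m. run t [m] c = Some c')"
proof
  assume "fs_move 1 t c c'"
  then show "\<exists>m. run t [m] c = Some c'"
  proof cases
    case (push k inp w out)
    then have "k = 1" by (simp add: one_enat_def)
    with push show ?thesis by (intro exI[of _ Push]) (cases inp, auto)
  next
    case (pop l w inp out)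
    then show ?thesis by (intro exI[of _ "Pop l"]) auto
  qed
next
  assume "\<exists>m. run t [m] c = Some c'"
  then obtain m where m: "run t [m] c = Some c'" ..
  obtain i w out where c: "c = (i, w, out)" by (cases c)
  show "fs_move 1 t c c'"
  proof (cases m)
    case Push
    with m c obtain x i' where "i = x # i'" "c' = (i', x # w, out)" by (auto split: list.splits)
    with c fs_move.push[of 1 1 i t w out] show ?thesis by (simp add: one_enat_def)
  next
    case (Pop l)
    with m c show ?thesis by (auto intro: fs_move.pop split: if_splits)
  qed
qed

lemma rtranclp_fs_move_1_iff_run: "(fs_move 1 t)\<^sup>*\<^sup>* c c' \<longleftrightarrow> (\<exists>ms. run t ms c = Some c')"
proof
  assume "(fs_move 1 t)\<^sup>*\<^sup>* c c'"
  then show "\<exists>ms. run t ms c = Some c'"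
  proof (induction rule: rtranclp_induct)
    case base
    show ?case by (intro exI[of _ "[]"]) simp
  next
    case (step c1 c2)
    then obtain ms m where "run t ms c = Some c1" "run t [m] c1 = Some c2"
      by (auto simp: fs_move_1_iff_run)
    then show ?case by (intro exI[of _ "ms @ [m]"]) (simp add: run_append)
  qed
next
  assume "\<exists>ms. run t ms c = Some c'"
  then obtain ms where "run t ms c = Some c'" ..
  then show "(fs_move 1 t)\<^sup>*\<^sup>* c c'"
  proof (induction ms arbitrary: c)
    case Nil
    then show ?case by simp
  next
    case (Cons m ms)
    then have "Option.bind (run t [m] c) (run t ms) = Some c'"
      by (simp only: run_append[symmetric] append_Cons append_Nil)
    then obtain c1 where "run t [m] c = Some c1" "run t ms c1 = Some c'"
      unfolding bind_eq_Some_conv by blast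
    with Cons.IH show ?case by (meson converse_rtranclp_into_rtranclp fs_move_1_iff_run)
  qed
qed

abbreviation sorted_config :: "nat \<Rightarrow> config" where
  "sorted_config n \<equiv> ([], [], [1..<n + 1])"

lemma forkstack_sortable_1_iff_run:
  "forkstack_sortable 1 t \<pi> \<longleftrightarrow> (\<exists>ms. run t ms (\<pi>, [], []) = Some (sorted_config (length \<pi>)))"
  by (simp add: forkstack_sortable_def rtranclp_fs_move_1_iff_run)

fun contents :: "config \<Rightarrow> nat list" where
  "contents (i, w, out) = i @ w @ out"

lemma run_mset_contents: "run t ms c = Some c' \<Longrightarrow> mset (contents c') = mset (contents c)"
proof (induction t ms c rule: run.induct)
  case (3 t l ms i w out)
  have "mset (drop l w) + mset (take l w) = mset w"
    by (metis append_take_drop_id mset_append union_commute)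
  with 3 show ?case by (auto simp: ac_simps split: if_splits)
qed (auto split: list.splits)

lemma run_output_suffix: "run t ms (i, w, out) = Some (i', w', out') \<Longrightarrow> \<exists>p. out' = p @ out"
  by (induction t ms "(i, w, out)" arbitrary: i w out rule: run.induct)
    (fastforce split: list.splits if_splits)+

section \<open>Canonical runs\<close>

fun canonical :: "bool \<Rightarrow> move list \<Rightarrow> bool" where
  "canonical after_pop [] = True"
| "canonical after_pop (Push # ms) = canonical False ms"
| "canonical after_pop (Pop l # ms) = ((2 \<le> l \<longrightarrow> after_pop) \<and> canonical True ms)"

lemma not_canonical_cases:
  "\<not> canonical f ms \<Longrightarrow>
     (\<exists>l ms'. ms = Pop l # ms' \<and> 2 \<le> l \<and> \<not> f) \<or> (\<exists>u v l. 2 \<le> l \<and> ms = u @ Push # Pop l # v)"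
proof (induction f ms rule: canonical.induct)
  case (2 f ms)
  then show ?case by (metis append_Cons append_Nil canonical.simps(2))
next
  case (3 f l ms)
  then show ?case by (metis append_Cons canonical.simps(3))
qed simp

definition excess :: "move list \<Rightarrow> nat" where
  "excess ms = (\<Sum>m\<leftarrow>ms. case m of Push \<Rightarrow> 0 | Pop l \<Rightarrow> l - 1)"

lemma run_push_pop_reorder:
  assumes "2 \<le> l" "run t (Push # Pop l # ms) c = Some c'"
  shows "run t (Pop (l - 1) # Push # Pop 1 # ms) c = Some c'"
proof -
  obtain i w out where c: "c = (i, w, out)" by (cases c)
  with assms obtain x i' where i: "i = x # i'" by (cases i) auto
  with assms c have l: "enat l \<le> t" "l \<le> Suc (length w)"
    and ms: "run t ms (i', drop l (x # w), take l (x # w) @ out) = Some c'"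
    by (auto split: if_splits)
  have "enat (l - 1) \<le> t" "enat 1 \<le> t"
    using l(1) assms(1) by (simp_all add: order_trans[OF _ l(1)])
  moreover have "drop l (x # w) = drop (l - 1) w" "take l (x # w) = x # take (l - 1) w"
    using assms(1) by (cases l; simp)+
  ultimately show ?thesis using assms(1) c i l(2) ms by auto
qed

lemma canonical_run_exists:
  assumes "run t ms (i, [], out) = Some c'"
  shows "\<exists>ms'. run t ms' (i, [], out) = Some c' \<and> canonical False ms'"
  using assms
proof (induction "excess ms" arbitrary: ms rule: less_induct)
  case less
  show ?case
  proof (cases "canonical False ms")
    case False
    with less.prems not_canonical_cases obtain u v l where
      l: "2 \<le> l" and ms: "ms = u @ Push # Pop l # v"
      by fastforce
    obtain c1 where c1: "run t u (i, [], out) = Some c1" "run t (Push # Pop l # v) c1 = Some c'"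
      using less.prems unfolding ms run_append bind_eq_Some_conv by blast
    define ms' where "ms' = u @ Pop (l - 1) # Push # Pop 1 # v"
    have "run t ms' (i, [], out) = Some c'"
      unfolding ms'_def run_append using c1(1) run_push_pop_reorder[OF l c1(2)] by simp
    moreover have "excess ms' < excess ms"
      using l by (simp add: ms ms'_def excess_def)
    ultimately show ?thesis using less.hyps by blast
  qed (use less.prems in blast)
qed

lemma suffix_of_upt:
  assumes "[1..<n + 1] = p @ out"
  shows "out = [n + 1 - length out..<n + 1]"
proof -
  have "out = drop (length p) [1..<n + 1]" using assms by simp
  moreover have "length p = n - length out" using arg_cong[OF assms, of length] by simp
  ultimately show ?thesis using arg_cong[OF assms, of length] by (simp add: Suc_diff_le)
qed

lemma sorting_pop_outputs_next:
  assumes "run t (Pop l # ms) (i, w, out) = Some (sorted_config n)"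
  shows "1 \<le> l \<and> l \<le> length w \<and> w ! (l - 1) = n - length out"
proof -
  have l: "1 \<le> l" "l \<le> length w"
    and ms: "run t ms (i, drop l w, take l w @ out) = Some (sorted_config n)"
    using assms by (auto split: if_splits)
  from run_output_suffix[OF ms] obtain p where p: "[1..<n + 1] = p @ take l w @ out" by auto
  have "take l w @ out = [n + 1 - (l + length out)..<n + 1]"
    using suffix_of_upt[OF p] l by simp
  from arg_cong[OF this, of "\<lambda>xs. xs ! (l - 1)"] arg_cong[OF p, of length] l
  show ?thesis by (simp add: nth_append)
qed

text \<open>The first pop of such a run takes a single element, which must be the next output.\<close>

lemma canonical_sorting_run_next_on_top:
  assumes "run t ms (i, w, out) = Some (sorted_config n)" "canonical False ms"
    and "distinct (contents (i, w, out))" "k < length w" "w ! k = n - length out"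
  shows "k = 0"
  using assms
proof (induction ms arbitrary: i w k)
  case (Cons m ms)
  show ?case
  proof (cases m)
    case Push
    with Cons.prems obtain x i' where i: "i = x # i'" by (cases i) auto
    with Cons.prems Push have "Suc k = 0"
      by (intro Cons.IH[of i' "x # w" "Suc k"]) auto
    then show ?thesis by simp
  next
    case (Pop l)
    with Cons.prems have "l = 1" by (auto split: if_splits)
    with Cons.prems Pop sorting_pop_outputs_next[of t l ms i w out n]
    have "w ! 0 = w ! k" by simp
    moreover have "distinct w" using Cons.prems(3) by simp
    ultimately show ?thesis using Cons.prems(4) nth_eq_iff_index_eq[of w 0 k] by (cases w) auto
  qed
qed simp

lemma canonical_sorting_runs_first_move:
  assumes "run t (m1 # ms1) c = Some (sorted_config n)"
    and "run t (m2 # ms2) c = Some (sorted_config n)"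
    and "canonical f (m1 # ms1)" "canonical f (m2 # ms2)" "distinct (contents c)"
  shows "m1 = m2"
proof -
  obtain i w out where c: "c = (i, w, out)" by (cases c)
  have pop_next: "1 \<le> l \<and> l \<le> length w \<and> w ! (l - 1) = n - length out"
    if "run t (Pop l # ms) c = Some (sorted_config n)" for l ms
    using that unfolding c by (rule sorting_pop_outputs_next)
  have no_push_pop: False
    if "run t (Push # ms) c = Some (sorted_config n)" "canonical f (Push # ms)"
      and "run t (Pop l # ms') c = Some (sorted_config n)" for ms l ms'
  proof -
    from that(1) c obtain x i' where i: "i = x # i'" by (cases i) auto
    have "1 \<le> l" "l \<le> length w" "w ! (l - 1) = n - length out"
      using pop_next[OF that(3)] by auto
    with that(1,2) assms(5) c i have "l = 0"
      by (intro canonical_sorting_run_next_on_top[of t ms i' "x # w" out n l]) auto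
    with \<open>1 \<le> l\<close> show False by simp
  qed
  show ?thesis
  proof (cases m1; cases m2)
    fix l2 assume "m1 = Push" "m2 = Pop l2"
    with assms(1-3) no_push_pop show ?thesis by simp
  next
    fix l1 assume "m1 = Pop l1" "m2 = Push"
    with assms(1,2,4) no_push_pop show ?thesis by simp
  next
    fix l1 l2 assume m: "m1 = Pop l1" "m2 = Pop l2"
    have "w ! (l1 - 1) = w ! (l2 - 1)" "1 \<le> l1" "1 \<le> l2" "l1 \<le> length w" "l2 \<le> length w"
      using pop_next[of l1 ms1] pop_next[of l2 ms2] assms(1,2) m by simp_all
    moreover have "distinct w" using assms(5) c by simp
    ultimately have "l1 - 1 = l2 - 1" by (simp add: nth_eq_iff_index_eq)
    with m \<open>1 \<le> l1\<close> \<open>1 \<le> l2\<close> show ?thesis by simp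
  qed simp
qed

lemma canonical_sorting_run_unique:
  assumes "run t ms1 c = Some (sorted_config n)" "run t ms2 c = Some (sorted_config n)"
    and "canonical f ms1" "canonical f ms2" "distinct (contents c)"
  shows "ms1 = ms2"
  using assms
proof (induction ms1 arbitrary: ms2 c f)
  case Nil
  then show ?case by (cases ms2; cases "hd ms2") (auto split: if_splits)
next
  case (Cons m ms1)
  have "ms2 \<noteq> []"
  proof
    assume "ms2 = []"
    with Cons.prems(1,2) show False by (cases m) (auto split: if_splits)
  qed
  with Cons.prems canonical_sorting_runs_first_move obtain ms2' where ms2: "ms2 = m # ms2'"
    by (metis list.exhaust)
  obtain c1 where c1: "run t [m] c = Some c1" "run t ms1 c1 = Some (sorted_config n)"
    using Cons.prems(1) run_append[of t "[m]" ms1 c] by (cases "run t [m] c") auto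
  have "run t ms2' c1 = Some (sorted_config n)"
    using Cons.prems(2) c1(1) run_append[of t "[m]" ms2' c] by (simp add: ms2)
  moreover have "distinct (contents c1)"
    using Cons.prems(5) run_mset_contents[OF c1(1)] by (metis mset_eq_imp_distinct_iff)
  ultimately show ?case
    using Cons.IH[OF c1(2)] Cons.prems(3,4) ms2 by (cases m) auto
qed

section \<open>Runs as lattice walks\<close>

definition pushes :: "move list \<Rightarrow> nat" where
  "pushes ms = length (filter (\<lambda>m. m = Push) ms)"

definition popped :: "move list \<Rightarrow> nat" where
  "popped ms = (\<Sum>m\<leftarrow>ms. case m of Push \<Rightarrow> 0 | Pop l \<Rightarrow> l)"

lemma pushes_simps [simp]:
  "pushes [] = 0" "pushes (Push # ms) = Suc (pushes ms)" "pushes (Pop l # ms) = pushes ms"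
  "pushes (ms @ ms') = pushes ms + pushes ms'" "pushes (rev ms) = pushes ms"
  by (auto simp: pushes_def rev_filter[symmetric])

lemma popped_simps [simp]:
  "popped [] = 0" "popped (Push # ms) = popped ms" "popped (Pop l # ms) = l + popped ms"
  "popped (ms @ ms') = popped ms + popped ms'"
  by (auto simp: popped_def)

lemma pushes_le_length: "pushes ms \<le> length ms"
  by (simp add: pushes_def)

lemma Pop_le_popped: "Pop l \<in> set ms \<Longrightarrow> l \<le> popped ms"
  by (induction ms) (auto simp: popped_def split: move.splits)

lemma run_length_input:
  "run t ms (i, w, out) = Some (i', w', out') \<Longrightarrow> length i = pushes ms + length i'"
  by (induction t ms "(i, w, out)" arbitrary: i w out rule: run.induct)
    (auto split: list.splits if_splits)

text \<open>The stack heights along a canonical run, with the flag recording whether the previous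
  move was a pop.\<close>

fun walk :: "enat \<Rightarrow> nat \<Rightarrow> bool \<Rightarrow> move list \<Rightarrow> (nat \<times> bool) option" where
  "walk t h f [] = Some (h, f)"
| "walk t h f (Push # ms) = walk t (Suc h) False ms"
| "walk t h f (Pop l # ms) =
     (if 1 \<le> l \<and> enat l \<le> t \<and> l \<le> h \<and> (2 \<le> l \<longrightarrow> f) then walk t (h - l) True ms else None)"

text \<open>The same walk read backwards: the flag records that the move just read is a pop of at least
  two elements, which must not be preceded by a push.\<close>

fun back_walk :: "enat \<Rightarrow> nat \<Rightarrow> bool \<Rightarrow> move list \<Rightarrow> (nat \<times> bool) option" where
  "back_walk t h g [] = Some (h, g)"
| "back_walk t h g (Push # w) = (if \<not> g \<and> 0 < h then back_walk t (h - 1) False w else None)"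
| "back_walk t h g (Pop l # w) =
     (if 1 \<le> l \<and> enat l \<le> t then back_walk t (h + l) (2 \<le> l) w else None)"

lemma walk_append:
  "walk t h f (ms @ ms') = (case walk t h f ms of None \<Rightarrow> None | Some (h', f') \<Rightarrow> walk t h' f' ms')"
  by (induction t h f ms rule: walk.induct) auto

lemma back_walk_append:
  "back_walk t h g (w @ w') =
     (case back_walk t h g w of None \<Rightarrow> None | Some (h', g') \<Rightarrow> back_walk t h' g' w')"
  by (induction t h g w rule: back_walk.induct) auto

lemma walk_imp_back_walk_rev:
  assumes "walk t h f ms = Some (h', f')" "g \<longrightarrow> f'"
  shows "\<exists>g'. back_walk t h' g (rev ms) = Some (h, g') \<and> (g' \<longrightarrow> f)"
  using assms
proof (induction ms arbitrary: h' f' g rule: rev_induct)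
  case (snoc m ms)
  obtain h1 f1 where ms: "walk t h f ms = Some (h1, f1)" and m: "walk t h1 f1 [m] = Some (h', f')"
    using snoc.prems(1) by (auto simp: walk_append split: option.splits)
  show ?case
  proof (cases m)
    case Push
    with m snoc.prems(2) snoc.IH[OF ms, of False] show ?thesis by auto
  next
    case (Pop l)
    with m snoc.IH[OF ms, of "2 \<le> l"] show ?thesis by (auto split: if_splits)
  qed
qed simp

lemma back_walk_imp_walk_rev:
  assumes "back_walk t h' g w = Some (h, g')" "g' \<longrightarrow> f"
  shows "\<exists>f'. walk t h f (rev w) = Some (h', f') \<and> (g \<longrightarrow> f')"
  using assms
proof (induction w arbitrary: h' g)
  case (Cons m w)
  show ?case
  proof (cases m)
    case Push
    with Cons.prems have "\<not> g" "0 < h'" and w: "back_walk t (h' - 1) False w = Some (h, g')"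
      by (auto split: if_splits)
    with Cons.IH[OF w Cons.prems(2)] Push show ?thesis by (auto simp: walk_append)
  next
    case (Pop l)
    with Cons show ?thesis by (fastforce simp: walk_append split: if_splits)
  qed
qed simp

lemma run_imp_walk:
  assumes "run t ms (i, w, out) = Some (i', w', out')" "canonical f ms"
  shows "\<exists>f'. walk t (length w) f ms = Some (length w', f')"
  using assms
  by (induction t ms "(i, w, out)" arbitrary: i w out f rule: run.induct)
    (fastforce split: list.splits if_splits)+

lemma walk_imp_canonical: "walk t h f ms = Some x \<Longrightarrow> canonical f ms"
  by (induction t h f ms rule: walk.induct) (auto split: if_splits)

lemma back_walk_balance: "back_walk t h g w = Some (h', g') \<Longrightarrow> h + popped w = h' + pushes w"
  by (induction t h g w rule: back_walk.induct) (auto split: if_splits)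

lemma back_walk_length: "back_walk t h g w = Some x \<Longrightarrow> length w \<le> pushes w + popped w"
  by (induction t h g w rule: back_walk.induct) (auto split: if_splits)

lemma back_walk_imp_unrun:
  assumes "back_walk t h g w = Some (h', g')" "length wk = h" "popped w \<le> length out"
  shows "\<exists>i' wk' out'. unrun t w (i, wk, out) = Some (i', wk', out') \<and>
           length wk' = h' \<and> length out' = length out - popped w"
  using assms
proof (induction w arbitrary: h g i wk out)
  case (Cons m w)
  show ?case
  proof (cases m)
    case Push
    with Cons.prems obtain x wk1 where "wk = x # wk1" by (cases wk) (auto split: if_splits)
    with Cons Push show ?thesis by (auto split: if_splits)
  next
    case (Pop l)
    with Cons.prems have "1 \<le> l" "enat l \<le> t" and w: "back_walk t (h + l) (2 \<le> l) w = Some (h', g')"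
      by (auto split: if_splits)
    moreover have "length (take l out @ wk) = h + l" using Cons.prems Pop by auto
    ultimately show ?thesis using Cons.IH[OF w, of "take l out @ wk" "drop l out" i] Cons.prems Pop
      by auto
  qed
qed simp

definition paths :: "enat \<Rightarrow> nat \<Rightarrow> nat \<Rightarrow> bool \<Rightarrow> move list set" where
  "paths t L h g = {w. back_walk t h g w = Some (0, False) \<and> length w \<le> L}"

definition excursions :: "enat \<Rightarrow> nat \<Rightarrow> move list set" where
  "excursions t n = {w. back_walk t 0 False w = Some (0, False) \<and> pushes w = n}"

lemma paths_subset_lists: "paths t L h g \<subseteq> {w. set w \<subseteq> insert Push (Pop ` {..L}) \<and> length w \<le> L}"
proof
  fix w assume "w \<in> paths t L h g"
  then have walk: "back_walk t h g w = Some (0, False)" and L: "length w \<le> L"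
    by (auto simp: paths_def)
  have "popped w \<le> L"
    using back_walk_balance[OF walk] pushes_le_length[of w] L by simp
  then have "set w \<subseteq> insert Push (Pop ` {..L})"
  proof (intro subsetI)
    fix m assume "m \<in> set w"
    with \<open>popped w \<le> L\<close> show "m \<in> insert Push (Pop ` {..L})"
      by (cases m) (auto dest: Pop_le_popped)
  qed
  with L show "w \<in> {w. set w \<subseteq> insert Push (Pop ` {..L}) \<and> length w \<le> L}" by simp
qed

lemma finite_paths: "finite (paths t L h g)"
  by (rule finite_subset[OF paths_subset_lists]) (rule finite_lists_length_le, auto)

lemma excursions_subset_paths: "excursions t n \<subseteq> paths t (2 * n) 0 False"
proof
  fix w assume "w \<in> excursions t n"
  then have walk: "back_walk t 0 False w = Some (0, False)" and "pushes w = n"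
    by (auto simp: excursions_def)
  with back_walk_balance[OF walk] back_walk_length[OF walk]
  show "w \<in> paths t (2 * n) 0 False" by (simp add: paths_def)
qed

lemma finite_excursions: "finite (excursions t n)"
  using finite_subset[OF excursions_subset_paths finite_paths] .

lemma excursion_decodes:
  assumes "w \<in> excursions t n"
  shows "\<exists>\<pi> \<in> perms_of n. forkstack_sortable 1 t \<pi> \<and> unrun t w (sorted_config n) = Some (\<pi>, [], [])"
proof -
  have walk: "back_walk t 0 False w = Some (0, False)" and n: "pushes w = n"
    using assms by (auto simp: excursions_def)
  then have "popped w = n" using back_walk_balance[OF walk] by simp
  with back_walk_imp_unrun[OF walk, of "[]" "[1..<n + 1]" "[]"]
  obtain \<pi> where \<pi>: "unrun t w (sorted_config n) = Some (\<pi>, [], [])" by auto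
  then have run: "run t (rev w) (\<pi>, [], []) = Some (sorted_config n)" by (simp add: run_iff_unrun)
  have mset: "mset \<pi> = mset [1..<n + 1]" using run_mset_contents[OF run] by simp
  then have "distinct \<pi>" "set \<pi> = {1..n}" "length \<pi> = n"
    by (metis distinct_upt mset_eq_imp_distinct_iff, metis atLeastLessThanSuc_atLeastAtMost
        set_mset_mset set_upt Suc_eq_plus1, metis length_upt size_mset diff_add_inverse2)
  with run \<pi> show ?thesis by (auto simp: perms_of_def forkstack_sortable_1_iff_run)
qed

lemma sortable_encodes:
  assumes "\<pi> \<in> perms_of n" "forkstack_sortable 1 t \<pi>"
  shows "\<exists>w \<in> excursions t n. unrun t w (sorted_config n) = Some (\<pi>, [], [])"
proof -
  have n: "length \<pi> = n" using assms(1) by (auto simp: perms_of_def distinct_card[symmetric])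
  with assms(2) obtain ms where "run t ms (\<pi>, [], []) = Some (sorted_config n)"
    by (auto simp: forkstack_sortable_1_iff_run)
  with canonical_run_exists obtain ms where
    run: "run t ms (\<pi>, [], []) = Some (sorted_config n)" and canonical: "canonical False ms"
    by blast
  from run_imp_walk[OF run canonical] obtain f where "walk t 0 False ms = Some (0, f)" by auto
  from walk_imp_back_walk_rev[OF this, of False]
  have "back_walk t 0 False (rev ms) = Some (0, False)" by auto
  moreover have "pushes ms = n" using run_length_input[OF run] n by simp
  ultimately show ?thesis using run by (auto simp: excursions_def run_iff_unrun)
qed

lemma excursions_decode_inj:
  assumes "w1 \<in> excursions t n" "w2 \<in> excursions t n"
    and "unrun t w1 (sorted_config n) = Some c" "unrun t w2 (sorted_config n) = Some c"
    and "distinct (contents c)"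
  shows "w1 = w2"
proof -
  have "canonical False (rev w)" if "w \<in> excursions t n" for w
    using that back_walk_imp_walk_rev[of t 0 False w 0 False False] walk_imp_canonical
    by (force simp: excursions_def)
  with assms have "rev w1 = rev w2"
    by (intro canonical_sorting_run_unique[of t "rev w1" c n "rev w2" False])
      (simp_all add: run_iff_unrun)
  then show ?thesis by simp
qed

theorem fs_count_eq_card_excursions: "fs_count 1 t n = card (excursions t n)"
proof -
  let ?A = "{\<pi> \<in> perms_of n. forkstack_sortable 1 t \<pi>}"
  define decode where "decode w = fst (the (unrun t w (sorted_config n)))" for w
  have decode: "unrun t w (sorted_config n) = Some (decode w, [], [])" "decode w \<in> ?A"
    if "w \<in> excursions t n" for w
    using excursion_decodes[OF that] by (auto simp: decode_def)
  have "bij_betw decode (excursions t n) ?A"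
  proof (rule bij_betw_imageI)
    show "inj_on decode (excursions t n)"
    proof (rule inj_onI)
      fix w1 w2 assume w: "w1 \<in> excursions t n" "w2 \<in> excursions t n" "decode w1 = decode w2"
      have "distinct (contents (decode w1, [], []))"
        using decode(2)[OF w(1)] by (simp add: perms_of_def)
      with w decode(1)[OF w(1)] decode(1)[OF w(2)] show "w1 = w2"
        by (intro excursions_decode_inj) auto
    qed
    show "decode ` excursions t n = ?A"
    proof (intro equalityI subsetI)
      fix \<pi> assume "\<pi> \<in> ?A"
      with sortable_encodes obtain w
        where "w \<in> excursions t n" "unrun t w (sorted_config n) = Some (\<pi>, [], [])"
        by blast
      with decode(1) show "\<pi> \<in> decode ` excursions t n" by force
    qed (use decode(2) in blast)
  qed
  then show ?thesis unfolding fs_count_def by (simp add: bij_betw_same_card)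
qed

section \<open>Generating functions of paths\<close>

definition path_gf :: "enat \<Rightarrow> real \<Rightarrow> nat \<Rightarrow> nat \<Rightarrow> bool \<Rightarrow> real" where
  "path_gf t x L h g = (\<Sum>w\<in>paths t L h g. x ^ pushes w)"

text \<open>Splitting off the first move of a path: it is empty, or starts with a push or with a pop of
  \<open>l\<close> elements.\<close>

definition transfer :: "enat \<Rightarrow> real \<Rightarrow> nat \<Rightarrow> (nat \<Rightarrow> bool \<Rightarrow> real) \<Rightarrow> nat \<Rightarrow> bool \<Rightarrow> real" where
  "transfer t x L V h g =
     (if h = 0 \<and> \<not> g then 1 else 0) + (if \<not> g \<and> 0 < h then x * V (h - 1) False else 0) +
     (\<Sum>l | 1 \<le> l \<and> l \<le> L \<and> enat l \<le> t. V (h + l) (2 \<le> l))"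

lemma finite_pop_sizes: "finite {l. 1 \<le> l \<and> l \<le> L \<and> enat l \<le> t}"
  by (rule finite_subset[of _ "{..L}"]) auto

lemma transfer_mono:
  assumes "0 \<le> x" "\<And>h g. V h g \<le> V' h g"
  shows "transfer t x L V h g \<le> transfer t x L V' h g"
  unfolding transfer_def using assms by (auto intro!: add_mono sum_mono mult_left_mono)

lemma path_gf_nonneg: "0 \<le> x \<Longrightarrow> 0 \<le> path_gf t x L h g"
  unfolding path_gf_def by (auto intro: sum_nonneg)

lemma path_gf_mono: "0 \<le> x \<Longrightarrow> L \<le> L' \<Longrightarrow> path_gf t x L h g \<le> path_gf t x L' h g"
  unfolding path_gf_def by (rule sum_mono2[OF finite_paths]) (auto simp: paths_def)

lemma paths_0: "paths t 0 h g = (if h = 0 \<and> \<not> g then {[]} else {})"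
  by (auto simp: paths_def)

lemma path_gf_0: "path_gf t x 0 h g = (if h = 0 \<and> \<not> g then 1 else 0)"
  by (simp add: path_gf_def paths_0)

lemma paths_Suc:
  "paths t (Suc L) h g =
     (if h = 0 \<and> \<not> g then {[]} else {}) \<union>
     (if \<not> g \<and> 0 < h then (#) Push ` paths t L (h - 1) False else {}) \<union>
     (\<Union>l \<in> {l. 1 \<le> l \<and> l \<le> L \<and> enat l \<le> t}. (#) (Pop l) ` paths t L (h + l) (2 \<le> l))"
  (is "?A = ?B")
proof
  show "?A \<subseteq> ?B"
  proof
    fix w assume "w \<in> ?A"
    then have walk: "back_walk t h g w = Some (0, False)" and L: "length w \<le> Suc L"
      by (auto simp: paths_def)
    show "w \<in> ?B"
    proof (cases w)
      case (Cons m w')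
      show ?thesis
      proof (cases m)
        case Push
        with walk L Cons show ?thesis by (auto simp: paths_def split: if_splits)
      next
        case (Pop l)
        with walk Cons have l: "1 \<le> l" "enat l \<le> t"
          and walk': "back_walk t (h + l) (2 \<le> l) w' = Some (0, False)"
          by (auto split: if_splits)
        have "l \<le> L"
          using back_walk_balance[OF walk'] pushes_le_length[of w'] L Cons by simp
        with l walk' L Cons Pop show ?thesis by (auto simp: paths_def)
      qed
    qed (use walk in auto)
  qed
  show "?B \<subseteq> ?A" by (auto simp: paths_def split: if_splits)
qed

lemma path_gf_Suc: "path_gf t x (Suc L) h g = transfer t x L (path_gf t x L) h g"
proof -
  let ?I = "{l. 1 \<le> l \<and> l \<le> L \<and> enat l \<le> t}"
  let ?B1 = "if h = 0 \<and> \<not> g then {[]} else {}"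
  let ?B2 = "if \<not> g \<and> 0 < h then (#) Push ` paths t L (h - 1) False else {}"
  let ?B3 = "\<Union>l\<in>?I. (#) (Pop l) ` paths t L (h + l) (2 \<le> l)"
  let ?f = "\<lambda>w. x ^ pushes w"
  have fin: "finite ?B1" "finite ?B2" "finite ?B3"
    using finite_pop_sizes finite_paths by auto
  have "sum ?f ?B1 = (if h = 0 \<and> \<not> g then 1 else 0)" by simp
  moreover have "sum ?f ?B2 = (if \<not> g \<and> 0 < h then x * path_gf t x L (h - 1) False else 0)"
    by (simp add: path_gf_def sum.reindex sum_distrib_left)
  moreover have "sum ?f ?B3 = (\<Sum>l\<in>?I. path_gf t x L (h + l) (2 \<le> l))"
    by (subst sum.UNION_disjoint) (auto simp: finite_pop_sizes finite_paths path_gf_def sum.reindex)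
  moreover have "path_gf t x (Suc L) h g = sum ?f (?B1 \<union> ?B2) + sum ?f ?B3"
    unfolding path_gf_def paths_Suc using fin by (intro sum.union_disjoint) auto
  moreover have "sum ?f (?B1 \<union> ?B2) = sum ?f ?B1 + sum ?f ?B2"
    using fin by (intro sum.union_disjoint) auto
  ultimately show ?thesis by (simp add: transfer_def)
qed

lemma path_gf_le_supersolution:
  assumes x: "0 \<le> x" and V: "\<And>L h g. transfer t x L V h g \<le> V h g" and V_nonneg: "\<And>h g. 0 \<le> V h g"
  shows "path_gf t x L h g \<le> V h g"
proof (induction L arbitrary: h g)
  case 0
  have "path_gf t x 0 h g \<le> transfer t x 0 V h g"
    using x V_nonneg by (simp add: path_gf_0 transfer_def)
  also have "\<dots> \<le> V h g" by (rule V)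
  finally show ?case .
next
  case (Suc L)
  have "path_gf t x (Suc L) h g \<le> transfer t x L V h g"
    unfolding path_gf_Suc using x Suc.IH by (rule transfer_mono)
  also have "\<dots> \<le> V h g" by (rule V)
  finally show ?case .
qed

lemma card_excursions_le_supersolution:
  assumes "0 \<le> x" "\<And>L h g. transfer t x L V h g \<le> V h g" "\<And>h g. 0 \<le> V h g"
  shows "real (card (excursions t n)) * x ^ n \<le> V 0 False"
proof -
  have "real (card (excursions t n)) * x ^ n = (\<Sum>w\<in>excursions t n. x ^ pushes w)"
    by (simp add: excursions_def)
  also have "\<dots> \<le> path_gf t x (2 * n) 0 False"
    unfolding path_gf_def using assms(1)
    by (intro sum_mono2[OF finite_paths excursions_subset_paths]) auto
  also have "\<dots> \<le> V 0 False"
    using assms by (rule path_gf_le_supersolution)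
  finally show ?thesis .
qed

lemma sum_pop_weights_fifth_eq:
  "(\<Sum>l = 1..Suc L. (if 2 \<le> l then 4/5 else 2) * (1/3::real) ^ l) = 4/5 - 2/15 * (1/3) ^ L"
proof (induction L)
  case (Suc L)
  have "(\<Sum>l = 1..Suc (Suc L). (if 2 \<le> l then 4/5 else 2) * (1/3::real) ^ l) =
        4/5 - 2/15 * (1/3) ^ L + 4/5 * (1/3) ^ Suc (Suc L)"
    using Suc.IH by simp
  also have "\<dots> = 4/5 - 2/15 * (1/3) ^ Suc L" by simp
  finally show ?case .
qed simp

lemma sum_pop_weights_fifth:
  "(\<Sum>l = 1..L. (if 2 \<le> l then 4/5 else 2) * (1/3::real) ^ l) \<le> 4/5"
  by (cases L) (simp_all only: sum_pop_weights_fifth_eq, auto)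

text \<open>For \<open>t = \<infinity>\<close> the geometric ansatz \<open>c\<^sub>g 3\<^sup>-\<^sup>h\<close> solves the transfer equation at \<open>x = 1/5\<close>
  exactly, except at the origin.\<close>

lemma transfer_supersolution_fifth:
  defines "V \<equiv> \<lambda>h g. (if g then 4/5 else 2) * (1/3::real) ^ h"
  shows "transfer t (1/5) L V h g \<le> V h g"
proof -
  have "(\<Sum>l | 1 \<le> l \<and> l \<le> L \<and> enat l \<le> t. V (h + l) (2 \<le> l)) \<le> (\<Sum>l = 1..L. V (h + l) (2 \<le> l))"
    by (rule sum_mono2) (auto simp: V_def)
  also have "\<dots> = (1/3) ^ h * (\<Sum>l = 1..L. (if 2 \<le> l then 4/5 else 2) * (1/3) ^ l)"
    by (simp add: V_def sum_distrib_left power_add mult_ac)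
  also have "\<dots> \<le> (1/3) ^ h * (4/5)"
    by (intro mult_left_mono sum_pop_weights_fifth) simp
  finally have pops: "(\<Sum>l | 1 \<le> l \<and> l \<le> L \<and> enat l \<le> t. V (h + l) (2 \<le> l)) \<le> 4/5 * (1/3) ^ h"
    by simp
  show ?thesis
  proof (cases "\<not> g \<and> 0 < h")
    case True
    then have "1/5 * V (h - 1) False = 6/5 * (1/3) ^ h"
      by (cases h) (simp_all add: V_def)
    with True pops show ?thesis by (simp add: transfer_def V_def)
  qed (use pops in \<open>auto simp: transfer_def V_def\<close>)
qed

lemma transfer_supersolution_quarter:
  defines "V \<equiv> \<lambda>h (g::bool). 2 * (1/2::real) ^ h"
  shows "transfer 1 (1/4) L V h g \<le> V h g"
proof -
  have "(\<Sum>l | 1 \<le> l \<and> l \<le> L \<and> enat l \<le> 1. V (h + l) (2 \<le> l)) \<le> (\<Sum>l\<in>{1}. V (h + l) (2 \<le> l))"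
    by (rule sum_mono2) (auto simp: V_def one_enat_def)
  then have pops: "(\<Sum>l | 1 \<le> l \<and> l \<le> L \<and> enat l \<le> 1. V (h + l) (2 \<le> l)) \<le> (1/2) ^ h"
    by (simp add: V_def)
  show ?thesis
  proof (cases "\<not> g \<and> 0 < h")
    case True
    then have "1/4 * V (h - 1) False = (1/2) ^ h"
      by (cases h) (simp_all add: V_def)
    with True pops show ?thesis by (simp add: transfer_def V_def)
  next
    case False
    with pops have "transfer 1 (1/4) L V h g \<le> (if h = 0 \<and> \<not> g then 1 else 0) + (1/2) ^ h"
      by (auto simp: transfer_def)
    also have "\<dots> \<le> V h g" by (simp add: V_def)
    finally show ?thesis .
  qed
qed

lemma card_excursions_fifth: "real (card (excursions t n)) * (1/5) ^ n \<le> 2"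
  using card_excursions_le_supersolution[OF _ transfer_supersolution_fifth] by simp

lemma card_excursions_quarter: "real (card (excursions 1 n)) * (1/4) ^ n \<le> 2"
  using card_excursions_le_supersolution[OF _ transfer_supersolution_quarter] by simp

lemma back_walk_shift:
  "back_walk t h g w = Some (h', g') \<Longrightarrow> back_walk t (h + k) g w = Some (h' + k, g')"
  by (induction t h g w arbitrary: h' g' rule: back_walk.induct)
    (auto split: if_splits simp: ac_simps)

lemma excursion_push_unique:
  assumes "back_walk t 0 False e1 = Some (0, False)" "back_walk t 0 False e2 = Some (0, False)"
    and "e1 @ Push # p1 = e2 @ Push # p2"
  shows "e1 = e2 \<and> p1 = p2"
proof -
  have no_push: "back_walk t 0 False (e @ Push # q) = None"
    if "back_walk t 0 False e = Some (0, False)" for e q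
    using that by (simp add: back_walk_append)
  from assms(3) obtain us where
    "(e1 = e2 @ us \<and> us @ Push # p1 = Push # p2) \<or> (e1 @ us = e2 \<and> Push # p1 = us @ Push # p2)"
    by (auto simp: append_eq_append_conv2)
  moreover have "us = []"
    using calculation no_push[OF assms(1)] no_push[OF assms(2)] assms(1,2)
    by (cases us) (auto simp: Cons_eq_append_conv)
  ultimately show ?thesis by simp
qed

text \<open>Lifting an excursion by \<open>h + 1\<close> and appending a push and a path from height \<open>h\<close> gives a path
  from height \<open>h + 1\<close>.\<close>

lemma path_gf_excursion_push:
  assumes x: "0 \<le> x"
  shows "x * path_gf t x L1 0 False * path_gf t x L2 h False
           \<le> path_gf t x (L1 + L2 + 1) (Suc h) False"
proof -
  let ?A = "paths t L1 0 False" and ?B = "paths t L2 h False"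
  let ?f = "\<lambda>(e, p). e @ Push # p"
  have inj: "inj_on ?f (?A \<times> ?B)"
  proof (rule inj_onI)
    fix a b assume "a \<in> ?A \<times> ?B" "b \<in> ?A \<times> ?B" "?f a = ?f b"
    moreover obtain e1 p1 e2 p2 where "a = (e1, p1)" "b = (e2, p2)" by fastforce
    ultimately show "a = b"
      using excursion_push_unique[of t e1 e2 p1 p2] by (simp add: paths_def)
  qed
  have "e @ Push # p \<in> paths t (L1 + L2 + 1) (Suc h) False" if "e \<in> ?A" "p \<in> ?B" for e p
    using that back_walk_shift[of t 0 False e 0 False "Suc h"]
    by (auto simp: paths_def back_walk_append)
  then have image: "?f ` (?A \<times> ?B) \<subseteq> paths t (L1 + L2 + 1) (Suc h) False"
    by auto
  have "x * path_gf t x L1 0 False * path_gf t x L2 h False =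
        (\<Sum>e\<in>?A. \<Sum>p\<in>?B. x ^ pushes (?f (e, p)))"
    by (simp add: path_gf_def sum_distrib_left sum_distrib_right power_add mult_ac)
  also have "\<dots> = (\<Sum>w\<in>?f ` (?A \<times> ?B). x ^ pushes w)"
    by (simp add: sum.cartesian_product split_def sum.reindex[OF inj[unfolded split_def]])
  also have "\<dots> \<le> path_gf t x (L1 + L2 + 1) (Suc h) False"
    unfolding path_gf_def using x by (intro sum_mono2[OF finite_paths image]) simp
  finally show ?thesis .
qed

lemma path_gf_excursion_power:
  assumes x: "0 \<le> x"
  shows "x ^ h * path_gf t x L 0 False ^ (h + 1) \<le> path_gf t x ((h + 1) * (L + 1)) h False"
proof (induction h)
  case 0
  show ?case using path_gf_mono[OF x, of L "L + 1"] by simp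
next
  case (Suc h)
  let ?E = "path_gf t x L 0 False"
  have "x ^ Suc h * ?E ^ (Suc h + 1) = x * ?E * (x ^ h * ?E ^ (h + 1))"
    by (simp add: algebra_simps)
  also have "\<dots> \<le> x * ?E * path_gf t x ((h + 1) * (L + 1)) h False"
    using Suc.IH x path_gf_nonneg[OF x] by (intro mult_left_mono) simp_all
  also have "\<dots> \<le> path_gf t x (L + (h + 1) * (L + 1) + 1) (Suc h) False"
    by (rule path_gf_excursion_push[OF x])
  also have "L + (h + 1) * (L + 1) + 1 = (Suc h + 1) * (L + 1)"
    by simp
  finally show ?case .
qed

definition compositions :: "enat \<Rightarrow> nat \<Rightarrow> nat list set" where
  "compositions t m = {c. sum_list c = m \<and> (\<forall>a \<in> set c. 1 \<le> a \<and> enat a \<le> t)}"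

lemma compositions_subset_lists: "compositions t m \<subseteq> {c. set c \<subseteq> {..m} \<and> length c \<le> m}"
proof
  fix c assume "c \<in> compositions t m"
  then have c: "sum_list c = m" "\<forall>a \<in> set c. 1 \<le> a" by (auto simp: compositions_def)
  have "length c \<le> sum_list c"
    using c(2) by (induction c) auto
  moreover have "set c \<subseteq> {..m}"
    using c(1) member_le_sum_list by fastforce
  ultimately show "c \<in> {c. set c \<subseteq> {..m} \<and> length c \<le> m}" using c by auto
qed

lemma finite_compositions: "finite (compositions t m)"
  by (rule finite_subset[OF compositions_subset_lists]) (rule finite_lists_length_le, auto)

lemma back_walk_Pops:
  "\<forall>a \<in> set c. 1 \<le> a \<and> enat a \<le> t \<Longrightarrow> \<exists>g'. back_walk t h g (map Pop c) = Some (h + sum_list c, g')"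
proof (induction c arbitrary: h g)
  case (Cons a c)
  with Cons.IH[of "h + a" "2 \<le> a"] show ?case by (simp add: add.assoc)
qed simp

lemma pushes_map_Pop [simp]: "pushes (map Pop c) = 0"
  by (induction c) auto

lemma map_Pop_Push_eq_iff: "map Pop c1 @ Push # p1 = map Pop c2 @ Push # p2 \<longleftrightarrow> c1 = c2 \<and> p1 = p2"
  by (induction c1 arbitrary: c2) (auto simp: Cons_eq_append_conv append_eq_Cons_conv)

text \<open>A nonempty excursion starts with pops of sizes forming a composition of some \<open>m\<close>, the last of
  them a single pop (a push may not follow a larger one), and a push.\<close>

lemma path_gf_first_push:
  assumes x: "0 \<le> x" and t: "1 \<le> t" and L: "M + 2 + L' \<le> L"
  shows "1 + (\<Sum>m\<le>M. real (card (compositions t m)) * x * path_gf t x L' m False)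
           \<le> path_gf t x L 0 False"
proof -
  let ?D = "SIGMA m:{..M}. compositions t m \<times> paths t L' m False"
  let ?f = "\<lambda>(m::nat, c, p). map Pop (c @ [1]) @ Push # p"
  have inj: "inj_on ?f ?D"
  proof (rule inj_onI)
    fix a b assume "a \<in> ?D" "b \<in> ?D" "?f a = ?f b"
    moreover obtain m1 c1 p1 m2 c2 p2 where "a = (m1, c1, p1)" "b = (m2, c2, p2)"
      by (cases a, cases b) auto
    ultimately show "a = b"
      using map_Pop_Push_eq_iff[of "c1 @ [1]" p1 "c2 @ [1]" p2] by (auto simp: compositions_def)
  qed
  have "?f (m, c, p) \<in> paths t L 0 False" if "(m, c, p) \<in> ?D" for m c p
  proof -
    from that have m: "m \<le> M" and c: "c \<in> compositions t m" and p: "p \<in> paths t L' m False"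
      by auto
    from c obtain g where "back_walk t 0 False (map Pop c) = Some (m, g)"
      using back_walk_Pops[of c t 0 False] by (auto simp: compositions_def)
    with t have "back_walk t 0 False (map Pop (c @ [1]) @ Push # p) = back_walk t m False p"
      by (simp add: back_walk_append one_enat_def)
    moreover have "length c \<le> m" using c compositions_subset_lists by auto
    ultimately show ?thesis
      using p m L by (auto simp: paths_def)
  qed
  then have image: "?f ` ?D \<subseteq> paths t L 0 False - {[]}"
    by force
  have "(\<Sum>w\<in>?f ` ?D. x ^ pushes w) = (\<Sum>(m, c, p)\<in>?D. x * x ^ pushes p)"
    by (subst sum.reindex[OF inj]) (simp add: o_def split_def)
  also have "\<dots> = (\<Sum>m\<le>M. \<Sum>(c, p)\<in>compositions t m \<times> paths t L' m False. x * x ^ pushes p)"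
    by (rule sum.Sigma[symmetric]) (simp_all add: finite_compositions finite_paths)
  also have "\<dots> = (\<Sum>m\<le>M. real (card (compositions t m)) * x * path_gf t x L' m False)"
    by (simp add: sum.cartesian_product[symmetric] path_gf_def sum_distrib_left mult_ac)
  finally have "(\<Sum>m\<le>M. real (card (compositions t m)) * x * path_gf t x L' m False) =
                (\<Sum>w\<in>?f ` ?D. x ^ pushes w)" ..
  also have "\<dots> \<le> (\<Sum>w\<in>paths t L 0 False - {[]}. x ^ pushes w)"
    using x by (intro sum_mono2[OF _ image]) (simp_all add: finite_paths)
  also have "1 + \<dots> = path_gf t x L 0 False"
    unfolding path_gf_def by (subst sum.remove[OF finite_paths, of "[]"]) (simp_all add: paths_def)
  finally show ?thesis by simp
qed

lemma path_gf_fixpoint_ineq: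
  assumes x: "0 \<le> x" and t: "1 \<le> t"
  shows "1 + (\<Sum>m\<le>M. real (card (compositions t m)) * (x * path_gf t x L 0 False) ^ (m + 1))
           \<le> path_gf t x (M + 2 + (M + 1) * (L + 1)) 0 False"
proof -
  let ?E = "path_gf t x L 0 False" and ?L' = "(M + 1) * (L + 1)"
  have "(x * ?E) ^ (m + 1) \<le> x * path_gf t x ?L' m False" if "m \<le> M" for m
  proof -
    have "(x * ?E) ^ (m + 1) = x * (x ^ m * ?E ^ (m + 1))"
      by (simp add: power_mult_distrib)
    also have "\<dots> \<le> x * path_gf t x ((m + 1) * (L + 1)) m False"
      using x by (intro mult_left_mono path_gf_excursion_power)
    also have "\<dots> \<le> x * path_gf t x ?L' m False"
      using x that by (intro mult_left_mono path_gf_mono mult_le_mono) simp_all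
    finally show ?thesis .
  qed
  then have "(\<Sum>m\<le>M. real (card (compositions t m)) * (x * ?E) ^ (m + 1))
             \<le> (\<Sum>m\<le>M. real (card (compositions t m)) * x * path_gf t x ?L' m False)"
    by (intro sum_mono) (simp add: mult.assoc mult_left_mono)
  also have "1 + \<dots> \<le> path_gf t x (M + 2 + ?L') 0 False"
    using x t by (rule path_gf_first_push) simp
  finally show ?thesis by simp
qed

lemma path_gf_le_partial_sum:
  assumes x: "0 \<le> x"
  shows "path_gf t x L 0 False \<le> (\<Sum>n\<le>L. real (card (excursions t n)) * x ^ n)"
proof -
  let ?P = "paths t L 0 False"
  have "path_gf t x L 0 False = (\<Sum>n\<in>pushes ` ?P. \<Sum>w | w \<in> ?P \<and> pushes w = n. x ^ pushes w)"
    unfolding path_gf_def by (rule sum.image_gen[OF finite_paths])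
  also have "\<dots> = (\<Sum>n\<in>pushes ` ?P. real (card {w \<in> ?P. pushes w = n}) * x ^ n)"
    by (rule sum.cong) auto
  also have "\<dots> \<le> (\<Sum>n\<in>pushes ` ?P. real (card (excursions t n)) * x ^ n)"
  proof (rule sum_mono)
    fix n
    have "{w \<in> ?P. pushes w = n} \<subseteq> excursions t n"
      by (auto simp: paths_def excursions_def)
    then have "card {w \<in> ?P. pushes w = n} \<le> card (excursions t n)"
      by (rule card_mono[OF finite_excursions])
    with x show "real (card {w \<in> ?P. pushes w = n}) * x ^ n \<le> real (card (excursions t n)) * x ^ n"
      by (intro mult_right_mono) auto
  qed
  also have "\<dots> \<le> (\<Sum>n\<le>L. real (card (excursions t n)) * x ^ n)"
  proof (rule sum_mono2)
    show "pushes ` ?P \<subseteq> {..L}"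
      using pushes_le_length by (fastforce simp: paths_def intro: le_trans)
  qed (use x in auto)
  finally show ?thesis .
qed

text \<open>\<open>E\<close> is the generating function of all excursions at \<open>x\<close>.\<close>

lemma summable_imp_fixpoint_ineq:
  assumes x: "0 \<le> x" and t: "1 \<le> t"
    and summable: "summable (\<lambda>n. real (card (excursions t n)) * x ^ n)"
  shows "\<exists>E \<ge> 1. \<forall>M. 1 + (\<Sum>m\<le>M. real (card (compositions t m)) * (x * E) ^ (m + 1)) \<le> E"
proof -
  define e where "e L = path_gf t x L 0 False" for L
  have "incseq e"
    unfolding e_def by (intro incseq_SucI path_gf_mono[OF x]) simp
  moreover have "e L \<le> suminf (\<lambda>n. real (card (excursions t n)) * x ^ n)" for L
  proof -
    have "e L \<le> (\<Sum>n<Suc L. real (card (excursions t n)) * x ^ n)"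
      unfolding e_def lessThan_Suc_atMost by (rule path_gf_le_partial_sum[OF x])
    also have "\<dots> \<le> suminf (\<lambda>n. real (card (excursions t n)) * x ^ n)"
      using x by (intro sum_le_suminf[OF summable]) auto
    finally show ?thesis .
  qed
  ultimately obtain E where lim: "e \<longlonglongrightarrow> E" and le: "\<And>L. e L \<le> E"
    using incseq_convergent by metis
  have "1 \<le> E" using le[of 0] by (simp add: e_def path_gf_0)
  moreover have "1 + (\<Sum>m\<le>M. real (card (compositions t m)) * (x * E) ^ (m + 1)) \<le> E" for M
  proof (rule LIMSEQ_le_const2)
    show "(\<lambda>L. 1 + (\<Sum>m\<le>M. real (card (compositions t m)) * (x * e L) ^ (m + 1)))
          \<longlonglongrightarrow> 1 + (\<Sum>m\<le>M. real (card (compositions t m)) * (x * E) ^ (m + 1))"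
      by (intro tendsto_intros lim)
    show "\<exists>N. \<forall>L\<ge>N. 1 + (\<Sum>m\<le>M. real (card (compositions t m)) * (x * e L) ^ (m + 1)) \<le> E"
    proof (intro exI allI impI)
      fix L
      have "1 + (\<Sum>m\<le>M. real (card (compositions t m)) * (x * e L) ^ (m + 1))
              \<le> e (M + 2 + (M + 1) * (L + 1))"
        unfolding e_def by (rule path_gf_fixpoint_ineq[OF x t])
      also have "\<dots> \<le> E" by (rule le)
      finally show "1 + (\<Sum>m\<le>M. real (card (compositions t m)) * (x * e L) ^ (m + 1)) \<le> E" .
    qed
  qed
  ultimately show ?thesis by blast
qed

section \<open>Bounds from the fixpoint inequality\<close>

lemma fixpoint_ineq_geometric:
  fixes y E :: real
  assumes y: "0 < y" and H: "\<And>M. 1 + (\<Sum>m\<le>M. y ^ (m + 1)) \<le> E"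
  shows "4 * y \<le> E"
proof (cases "y < 1")
  case True
  have partial: "(\<Sum>m<n. y ^ (m + 1)) \<le> E - 1" for n
  proof (cases n)
    case 0
    with H[of 0] y show ?thesis by simp
  next
    case (Suc M)
    with H[of M] show ?thesis by (simp add: lessThan_Suc_atMost)
  qed
  have "(\<lambda>m. y ^ (m + 1)) sums (y * (1 / (1 - y)))"
    using sums_mult[OF geometric_sums, of y y] y True by (simp add: mult_ac)
  then have "y / (1 - y) \<le> E - 1"
    using suminf_le_const[OF sums_summable partial] by (simp add: sums_iff)
  then have "1 \<le> E * (1 - y)"
    using True by (simp add: field_simps)
  moreover have "4 * y * (1 - y) \<le> 1"
    using zero_le_power2[of "2 * y - 1"] by (simp add: power2_eq_square algebra_simps)
  ultimately have "4 * y * (1 - y) \<le> E * (1 - y)" by linarith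
  with True show ?thesis by simp
next
  case False
  have "real (M + 1) \<le> E - 1" for M
  proof -
    have "real (M + 1) = (\<Sum>m\<le>M. 1)" by simp
    also have "\<dots> \<le> (\<Sum>m\<le>M. y ^ (m + 1))"
      using False by (intro sum_mono one_le_power) simp
    finally show ?thesis using H[of M] by simp
  qed
  from this[of "nat \<lceil>E\<rceil>"] show ?thesis by linarith
qed

lemma fixpoint_ineq_small_ratio:
  fixes y q E :: real
  assumes y: "0 \<le> y" "y < 9/20" and q: "0 \<le> q" "q \<le> 1/10" "(2 * y) ^ t \<le> q"
    and H: "1 + y + y\<^sup>2 * (\<Sum>k<t. (2 * y) ^ k) \<le> E"
  shows "y \<le> (1/5 + q) * E"
proof -
  define d where "d = 1 - 2 * y"
  have d: "1/10 < d" using y by (simp add: d_def)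
  have "(\<Sum>k<t. (2 * y) ^ k) = (1 - (2 * y) ^ t) / d"
    unfolding sum_gp_strict d_def using y by simp
  then have "d * (\<Sum>k<t. (2 * y) ^ k) = 1 - (2 * y) ^ t"
    using d by simp
  with q have geometric: "1 - q \<le> d * (\<Sum>k<t. (2 * y) ^ k)" by simp
  have "(1 + y) * d + y\<^sup>2 * (1 - q) \<le> (1 + y + y\<^sup>2 * (\<Sum>k<t. (2 * y) ^ k)) * d"
    using mult_left_mono[OF geometric, of "y\<^sup>2"] by (simp add: algebra_simps)
  also have "\<dots> \<le> E * d"
    using H d by (intro mult_right_mono) simp_all
  finally have Ed: "1 - y - y\<^sup>2 - y\<^sup>2 * q \<le> E * d"
    by (simp add: d_def algebra_simps power2_eq_square)
  have y2: "y\<^sup>2 \<le> 81/400"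
    using power_mono[of y "9/20" 2] y by (simp add: power2_eq_square)
  have "y\<^sup>2 * q \<le> 81/400 * (1/10)"
    using y2 q by (intro mult_mono) simp_all
  with y y2 have rest: "0 \<le> 1 - y - 6/5 * y\<^sup>2 - y\<^sup>2 * q"
    by linarith
  have "y * d = (1/5 + q) * (1 - y - y\<^sup>2 - y\<^sup>2 * q) - (1 - 3 * y)\<^sup>2 / 5
                 - q * (1 - y - 6/5 * y\<^sup>2 - y\<^sup>2 * q)"
    by (simp add: d_def power2_eq_square field_simps)
  also have "\<dots> \<le> (1/5 + q) * (1 - y - y\<^sup>2 - y\<^sup>2 * q)"
    using mult_nonneg_nonneg[OF q(1) rest] zero_le_power2[of "1 - 3 * y"] by linarith
  also have "\<dots> \<le> (1/5 + q) * (E * d)"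
    using Ed q by (intro mult_left_mono) simp_all
  finally have "y * d \<le> ((1/5 + q) * E) * d" by (simp add: mult_ac)
  with d show ?thesis by simp
qed

lemma fixpoint_ineq_large_ratio:
  fixes y E :: real
  assumes y: "9/20 \<le> y" and q: "(9/10::real) ^ t \<le> 1/10"
    and H: "1 + y + y\<^sup>2 * (\<Sum>k<t. (2 * y) ^ k) \<le> E"
  shows "5 * y \<le> E"
proof -
  have "9 \<le> 10 * (1 - (9/10::real) ^ t)"
    using q by simp
  also have "\<dots> = (\<Sum>k<t. (9/10) ^ k)"
    by (simp add: sum_gp_strict)
  also have "\<dots> \<le> (\<Sum>k<t. (2 * y) ^ k)"
    using y by (intro sum_mono power_mono) simp_all
  finally have "y\<^sup>2 * 9 \<le> y\<^sup>2 * (\<Sum>k<t. (2 * y) ^ k)"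
    by (rule mult_left_mono) simp
  moreover have "5 * y \<le> 1 + y + 9 * y\<^sup>2"
    using zero_le_power2[of "3 * y - 2/3"] by (simp add: power2_eq_square algebra_simps)
  ultimately show ?thesis using H by linarith
qed

lemma fixpoint_ineq_bounded_parts:
  fixes y E :: real
  assumes y: "0 \<le> y" and q: "(9/10::real) ^ t \<le> 1/10"
    and H: "1 + y + y\<^sup>2 * (\<Sum>k<t. (2 * y) ^ k) \<le> E"
  shows "y \<le> (1/5 + (9/10) ^ t) * E"
proof (cases "y < 9/20")
  case True
  have "(2 * y) ^ t \<le> (9/10) ^ t"
    using y True by (intro power_mono) simp_all
  with y True q H show ?thesis
    by (intro fixpoint_ineq_small_ratio) simp_all
next
  case False
  have "0 \<le> y\<^sup>2 * (\<Sum>k<t. (2 * y) ^ k)"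
    using y by (simp add: sum_nonneg)
  with H y have "0 \<le> E" by simp
  then have "E / 5 \<le> (1/5 + (9/10) ^ t) * E"
    by (simp add: algebra_simps)
  moreover have "5 * y \<le> E"
    using False by (intro fixpoint_ineq_large_ratio[OF _ q H]) simp
  ultimately show ?thesis by linarith
qed

lemma compositions_parts_le: "c \<in> compositions t m \<Longrightarrow> a \<in> set c \<Longrightarrow> a \<le> m"
  by (auto simp: compositions_def member_le_sum_list)

lemma card_compositions_Suc:
  assumes m: "1 \<le> m" and t: "enat (Suc m) \<le> t"
  shows "2 * card (compositions t m) \<le> card (compositions t (Suc m))"
proof -
  let ?C = "compositions t m" and ?grow = "\<lambda>c. Suc (hd c) # tl c"
  have head: "\<exists>a r. c = a # r \<and> 1 \<le> a \<and> a \<le> m" if "c \<in> ?C" for c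
    using that m compositions_parts_le[OF that] by (cases c) (auto simp: compositions_def)
  have "enat 1 \<le> t" using t by (simp add: order_trans[OF _ t])
  then have new: "1 # c \<in> compositions t (Suc m)" if "c \<in> ?C" for c
    using that by (simp add: compositions_def)
  have grow: "?grow c \<in> compositions t (Suc m)" if "c \<in> ?C" for c
  proof -
    from head[OF that] obtain a r where c: "c = a # r" "a \<le> m" by blast
    then have "enat (Suc a) \<le> t" by (simp add: order_trans[OF _ t])
    with that c show ?thesis by (simp add: compositions_def)
  qed
  have "1 # c \<noteq> ?grow c'" if "c' \<in> ?C" for c c'
    using head[OF that] by auto
  then have "(#) 1 ` ?C \<inter> ?grow ` ?C = {}"
    by blast
  moreover have "inj_on ?grow ?C"
  proof (rule inj_onI)
    fix c1 c2 assume "c1 \<in> ?C" "c2 \<in> ?C" "?grow c1 = ?grow c2"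
    with head[of c1] head[of c2] show "c1 = c2" by auto
  qed
  ultimately have "card ((#) 1 ` ?C \<union> ?grow ` ?C) = 2 * card ?C"
    by (simp add: card_Un_disjoint finite_compositions card_image)
  moreover have "(#) 1 ` ?C \<union> ?grow ` ?C \<subseteq> compositions t (Suc m)"
    using new grow by blast
  ultimately show ?thesis
    using card_mono[OF finite_compositions] by metis
qed

lemma card_compositions_pos: "c \<in> compositions t m \<Longrightarrow> 1 \<le> card (compositions t m)"
  using finite_compositions[of t m] by (auto simp: Suc_le_eq card_gt_0_iff)

lemma card_compositions_ge:
  assumes "enat (Suc k) \<le> t"
  shows "2 ^ k \<le> card (compositions t (Suc k))"
  using assms
proof (induction k)
  case 0
  then have "[1] \<in> compositions t 1" by (simp add: compositions_def one_enat_def)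
  then show ?case using card_compositions_pos by simp
next
  case (Suc k)
  have "2 ^ k \<le> card (compositions t (Suc k))"
    using Suc.prems by (intro Suc.IH) (simp add: order_trans[OF _ Suc.prems])
  moreover have "2 * card (compositions t (Suc k)) \<le> card (compositions t (Suc (Suc k)))"
    using Suc.prems by (intro card_compositions_Suc) simp_all
  ultimately show ?case by simp
qed

lemma compositions_series_ge:
  fixes y :: real
  assumes y: "0 \<le> y"
  shows "y + y\<^sup>2 * (\<Sum>k<t. (2 * y) ^ k)
           \<le> (\<Sum>m\<le>t. real (card (compositions (enat t) m)) * y ^ (m + 1))"
proof -
  have "[] \<in> compositions (enat t) 0" by (simp add: compositions_def)
  then have "1 \<le> card (compositions (enat t) 0)"
    by (rule card_compositions_pos)
  then have "y \<le> real (card (compositions (enat t) 0)) * y ^ (0 + 1)"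
    using y by (simp add: mult_le_cancel_right1)
  moreover have "y\<^sup>2 * (\<Sum>k<t. (2 * y) ^ k)
                   \<le> (\<Sum>k<t. real (card (compositions (enat t) (Suc k))) * y ^ (Suc k + 1))"
    unfolding sum_distrib_left
  proof (rule sum_mono)
    fix k assume "k \<in> {..<t}"
    then have card: "(2::real) ^ k \<le> real (card (compositions (enat t) (Suc k)))"
      using card_compositions_ge[of k "enat t"] by simp
    have "y\<^sup>2 * (2 * y) ^ k = 2 ^ k * y ^ (Suc k + 1)"
      by (simp add: power_mult_distrib power2_eq_square mult_ac)
    also have "\<dots> \<le> real (card (compositions (enat t) (Suc k))) * y ^ (Suc k + 1)"
      using card y by (intro mult_right_mono) simp_all
    finally show "y\<^sup>2 * (2 * y) ^ k
                    \<le> real (card (compositions (enat t) (Suc k))) * y ^ (Suc k + 1)" .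
  qed
  ultimately show ?thesis
    unfolding sum.atMost_shift[of _ t] by linarith
qed

lemma not_summable_quarter:
  assumes x: "1/4 < x"
  shows "\<not> summable (\<lambda>n. real (card (excursions 1 n)) * x ^ n)"
proof
  assume "summable (\<lambda>n. real (card (excursions 1 n)) * x ^ n)"
  with x obtain E where E: "1 \<le> E"
    and H: "\<And>M. 1 + (\<Sum>m\<le>M. real (card (compositions 1 m)) * (x * E) ^ (m + 1)) \<le> E"
    using summable_imp_fixpoint_ineq[of x 1] by auto
  have part: "(x * E) ^ (m + 1) \<le> real (card (compositions 1 m)) * (x * E) ^ (m + 1)" for m
  proof -
    have "replicate m 1 \<in> compositions 1 m"
      by (simp add: compositions_def one_enat_def sum_list_replicate)
    then have "1 \<le> real (card (compositions 1 m))"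
      using card_compositions_pos by simp
    moreover have "0 \<le> (x * E) ^ (m + 1)" using x E by simp
    ultimately show ?thesis by (metis mult_1 mult_right_mono)
  qed
  have "1 + (\<Sum>m\<le>M. (x * E) ^ (m + 1)) \<le> E" for M
  proof -
    have "(\<Sum>m\<le>M. (x * E) ^ (m + 1)) \<le> (\<Sum>m\<le>M. real (card (compositions 1 m)) * (x * E) ^ (m + 1))"
      by (intro sum_mono part)
    with H[of M] show ?thesis by linarith
  qed
  then have "4 * (x * E) \<le> 1 * E"
    using x E by (intro fixpoint_ineq_geometric) simp_all
  with x E show False
    using mult_strict_right_mono[of 1 "4 * x" E] by (simp add: mult_ac)
qed

lemma not_summable_bounded_pops:
  assumes q: "(9/10::real) ^ t \<le> 1/10" and x: "1/5 + (9/10) ^ t < x"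
  shows "\<not> summable (\<lambda>n. real (card (excursions (enat t) n)) * x ^ n)"
proof
  assume summable: "summable (\<lambda>n. real (card (excursions (enat t) n)) * x ^ n)"
  have "0 \<le> x" using x zero_le_power[of "9/10::real" t] by linarith
  moreover have "1 \<le> enat t" using q by (cases t) (simp_all add: one_enat_def)
  ultimately obtain E where E: "1 \<le> E"
    and H: "\<forall>M. 1 + (\<Sum>m\<le>M. real (card (compositions t m)) * (x * E) ^ (m + 1)) \<le> E"
    using summable_imp_fixpoint_ineq[OF _ _ summable] by blast
  have "0 \<le> x * E" using \<open>0 \<le> x\<close> E by simp
  from compositions_series_ge[OF this, of t] spec[OF H, of t]
  have "1 + x * E + (x * E)\<^sup>2 * (\<Sum>k<t. (2 * (x * E)) ^ k) \<le> E" by linarith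
  with \<open>0 \<le> x\<close> E q have "x * E \<le> (1/5 + (9/10) ^ t) * E"
    by (intro fixpoint_ineq_bounded_parts) simp_all
  with E x show False by simp
qed

lemma conv_radius_antimono:
  fixes a b :: "nat \<Rightarrow> real"
  assumes "\<And>n. 0 \<le> a n" "\<And>n. a n \<le> b n"
  shows "conv_radius b \<le> conv_radius a"
proof (rule conv_radius_geI_ex')
  fix r :: real assume r: "0 < r" "ereal r < conv_radius b"
  have "summable (\<lambda>n. b n * of_real r ^ n)"
    using summable_in_conv_radius[of "of_real r" b] r by simp
  then show "summable (\<lambda>n. a n * of_real r ^ n)"
    by (rule summable_comparison_test') (use assms r in \<open>auto intro: mult_right_mono\<close>)
qed

lemma conv_radius_ge_if_bounded:
  fixes a :: "nat \<Rightarrow> real"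
  assumes "\<And>n. 0 \<le> a n" "\<And>n. a n * q ^ n \<le> B" "0 < q"
  shows "ereal q \<le> conv_radius a"
proof (rule conv_radius_geI_ex')
  fix r :: real assume r: "0 < r" "ereal r < ereal q"
  show "summable (\<lambda>n. a n * of_real r ^ n)"
  proof (rule summable_comparison_test')
    show "summable (\<lambda>n. B * (r / q) ^ n)"
      using r assms(3) by (intro summable_mult summable_geometric) auto
    fix n
    have "a n * r ^ n = (a n * q ^ n) * (r / q) ^ n"
      using assms(3) by (simp add: power_divide)
    also have "\<dots> \<le> B * (r / q) ^ n"
      using assms r by (intro mult_right_mono) auto
    finally show "norm (a n * of_real r ^ n) \<le> B * (r / q) ^ n"
      using assms(1) r by simp
  qed
qed

lemma back_walk_mono: "t \<le> t' \<Longrightarrow> back_walk t h g w = Some z \<Longrightarrow> back_walk t' h g w = Some z"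
  by (induction t h g w rule: back_walk.induct) (auto split: if_splits intro: order_trans)

lemma card_excursions_mono: "t \<le> t' \<Longrightarrow> card (excursions t n) \<le> card (excursions t' n)"
  by (intro card_mono finite_excursions) (auto simp: excursions_def back_walk_mono)

lemma r_rad_eq_conv_radius: "r_rad t = conv_radius (\<lambda>n. real (card (excursions t n)))"
  unfolding r_rad_def fs_count_eq_card_excursions ..

lemma r_rad_antimono: "t \<le> t' \<Longrightarrow> r_rad t' \<le> r_rad t"
  unfolding r_rad_eq_conv_radius by (rule conv_radius_antimono) (simp_all add: card_excursions_mono)

lemma r_rad_ge_fifth: "ereal (1/5) \<le> r_rad t"
  unfolding r_rad_eq_conv_radius
  by (rule conv_radius_ge_if_bounded[OF _ card_excursions_fifth]) simp_all

lemma r_rad_1: "r_rad 1 = ereal (1/4)"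
proof (rule antisym)
  show "r_rad 1 \<le> ereal (1/4)"
    unfolding r_rad_eq_conv_radius by (rule conv_radius_leI_ex') (use not_summable_quarter in auto)
  show "ereal (1/4) \<le> r_rad 1"
    unfolding r_rad_eq_conv_radius
    by (rule conv_radius_ge_if_bounded[OF _ card_excursions_quarter]) simp_all
qed

lemma r_rad_enat_le:
  assumes "1 \<le> t"
  shows "r_rad (enat t) \<le> ereal (1/5 + (9/10) ^ t)"
proof (cases "(9/10::real) ^ t \<le> 1/10")
  case True
  then show ?thesis
    unfolding r_rad_eq_conv_radius
    by (intro conv_radius_leI_ex') (use not_summable_bounded_pops in auto)
next
  case False
  have "r_rad (enat t) \<le> r_rad 1"
    using assms by (intro r_rad_antimono) (simp add: one_enat_def)
  also have "\<dots> \<le> ereal (1/5 + (9/10) ^ t)"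
    using False by (simp add: r_rad_1)
  finally show ?thesis .
qed

lemma r_rad_infinity: "r_rad \<infinity> = ereal (1/5)"
proof -
  have le: "r_rad \<infinity> \<le> ereal (1/5 + (9/10) ^ Suc k)" for k
    using r_rad_antimono[of "enat (Suc k)" \<infinity>] r_rad_enat_le[of "Suc k"] by simp
  then obtain r where r: "r_rad \<infinity> = ereal r"
    using r_rad_ge_fifth[of \<infinity>] by (cases "r_rad \<infinity>") auto
  have "(\<lambda>k. 1/5 + (9/10::real) ^ Suc k) \<longlonglongrightarrow> 1/5 + 0"
    by (intro tendsto_intros LIMSEQ_power_zero[THEN LIMSEQ_Suc]) simp
  then have "r \<le> 1/5"
    using le r by (intro LIMSEQ_le_const[of _ "1/5"]) auto
  with r r_rad_ge_fifth[of \<infinity>] show ?thesis by simp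
qed

lemma r_rad_enat_bounds:
  assumes "1 \<le> t"
  shows "ereal (1/5) \<le> r_rad (enat t) \<and> r_rad (enat t) - ereal (1/5) \<le> ereal ((9/10) ^ t)"
proof -
  obtain r where "r_rad (enat t) = ereal r"
    using r_rad_ge_fifth[of "enat t"] r_rad_enat_le[OF assms] by (cases "r_rad (enat t)") auto
  with r_rad_ge_fifth[of "enat t"] r_rad_enat_le[OF assms] show ?thesis by simp
qed

theorem mainTheorem7:
  shows "r_rad 1 = ereal (1/4) \<and> r_rad \<infinity> = ereal (1/5) \<and>
    (\<exists>C::real. \<exists>c::real. C > 0 \<and> 0 < c \<and> c < 1 \<and>
      (\<forall>t::nat. t \<ge> 1 \<longrightarrow>
         ereal (1/5) \<le> r_rad (enat t) \<and> r_rad (enat t) - ereal (1/5) \<le> ereal (C * c ^ t)))"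
  using r_rad_1 r_rad_infinity r_rad_enat_bounds
  by (intro conjI exI[of _ 1] exI[of _ "9/10"]) auto

end
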